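(* Let $d_0$ and $d_1$ be metrics on $\omega$. The following are equivalent: (1) the completions of $\langle\omega,d_0\rangle$ and $\langle\omega,d_1\rangle$ are isometrically isomorphic Polish metric spaces; (2) there is a metric $d^*$ on $\omega$ and, for each $e\in\{0,1\}$, a dense isometry $\iota_e:\langle\omega,d_e\rangle\to\langle\omega,d^*\rangle$.
   Context: An isometry is a distance-preserving map (not necessarily onto); an isometrical isomorphism is an onto isometry; a dense isometry is an isometry with dense image. A completion of a metric space $\langle X,d\rangle$ is a complete metric space $\langle X^*,d^*\rangle$ together with a dense isometry $\langle X,d\rangle\to\langle X^*,d^*\rangle$. *)

theory Defs
  imports "HOL-Analysis.Analysis"
begin

definition isometry_map :: "'a set \<Rightarrow> ('a \<Rightarrow> 'a \<Rightarrow> real) \<Rightarrow> 'b set \<Rightarrow> ('b \<Rightarrow> 'b \<Rightarrow> real) \<Rightarrow> ('a \<Rightarrow> 'b) \<Rightarrow> bool" where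
  "isometry_map M d M' d' f \<longleftrightarrow>
     f ` M \<subseteq> M' \<and> (\<forall>x\<in>M. \<forall>y\<in>M. d' (f x) (f y) = d x y)"

definition isometric_iso :: "'a set \<Rightarrow> ('a \<Rightarrow> 'a \<Rightarrow> real) \<Rightarrow> 'b set \<Rightarrow> ('b \<Rightarrow> 'b \<Rightarrow> real) \<Rightarrow> ('a \<Rightarrow> 'b) \<Rightarrow> bool" where
  "isometric_iso M d M' d' f \<longleftrightarrow> isometry_map M d M' d' f \<and> f ` M = M'"

definition dense_isometry :: "'a set \<Rightarrow> ('a \<Rightarrow> 'a \<Rightarrow> real) \<Rightarrow> 'b set \<Rightarrow> ('b \<Rightarrow> 'b \<Rightarrow> real) \<Rightarrow> ('a \<Rightarrow> 'b) \<Rightarrow> bool" where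
  "dense_isometry M d M' d' f \<longleftrightarrow>
     isometry_map M d M' d' f \<and> Metric_space.mtopology M' d' closure_of (f ` M) = M'"

definition is_completion :: "'a set \<Rightarrow> ('a \<Rightarrow> 'a \<Rightarrow> real) \<Rightarrow> 'b set \<Rightarrow> ('b \<Rightarrow> 'b \<Rightarrow> real) \<Rightarrow> ('a \<Rightarrow> 'b) \<Rightarrow> bool" where
  "is_completion M d X dX iota \<longleftrightarrow>
     Metric_space X dX \<and> Metric_space.mcomplete X dX \<and> dense_isometry M d X dX iota"

definition Polish_metric_space :: "'a set \<Rightarrow> ('a \<Rightarrow> 'a \<Rightarrow> real) \<Rightarrow> bool" where
  "Polish_metric_space X dX \<longleftrightarrow>
     Metric_space X dX \<and> Metric_space.mcomplete X dX \<and> separable_space (Metric_space.mtopology X dX)"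

end

theory Submission imports Defs begin

(* Completions are unique up to isometry: an isometry into a complete space extends along any
   dense isometry, and an isometry out of a complete space with dense image is onto.
   For (2) ==> (1), the completion of (omega, d1) is, via iota1, also a completion of (omega, d* ),
   hence, via iota0, a completion of (omega, d0), so it is isometric to the completion X0.
   For (1) ==> (2), the images of omega in the common completion form a countably infinite dense
   set, and pulling the metric back along an enumeration of that set by omega gives d*. *)

lemma (in Metric_space) dense_in_mspace_iff:
  assumes "S \<subseteq> M"
  shows "mtopology closure_of S = M \<longleftrightarrow> (\<forall>x\<in>M. \<forall>r>0. \<exists>y\<in>S. d x y < r)"
  using assms unfolding metric_closure_of by (fastforce simp: in_mball)

lemma isometry_map_imp_inj_on:
  assumes "Metric_space M d" "Metric_space M' d'" "isometry_map M d M' d' f"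
  shows "inj_on f M"
proof (rule inj_onI)
  fix x y assume x: "x \<in> M" and y: "y \<in> M" and fxy: "f x = f y"
  have "f x \<in> M'" "d x y = d' (f x) (f y)"
    using assms(3) x y unfolding isometry_map_def by auto
  then have "d x y = 0"
    using Metric_space.zero[OF assms(2)] fxy by simp
  then show "x = y"
    using Metric_space.zero[OF assms(1)] x y by simp
qed

lemma isometry_map_imp_continuous_map:
  assumes "Metric_space M d" "Metric_space M' d'" "isometry_map M d M' d' f"
  shows "continuous_map (Metric_space.mtopology M d) (Metric_space.mtopology M' d') f"
  using assms(3) unfolding Metric_space.metric_continuous_map[OF assms(1,2)] isometry_map_def
  by metis

lemma continuous_map_isometric_on_dense:
  assumes M: "Metric_space M d" and Y: "Metric_space Y e"
    and S: "Metric_space.mtopology M d closure_of S = M" and h: "isometry_map S d Y e h"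
    and g: "continuous_map (Metric_space.mtopology M d) (Metric_space.mtopology Y e) g"
    and gh: "\<And>x. x \<in> S \<Longrightarrow> g x = h x"
  shows "isometry_map M d Y e g"
proof -
  interpret M: Metric_space M d by (rule M)
  interpret Y: Metric_space Y e by (rule Y)
  let ?T = "prod_topology M.mtopology M.mtopology"
  have gfst: "continuous_map ?T (mtopology_of (metric(Y,e))) (g \<circ> fst)"
    and gsnd: "continuous_map ?T (mtopology_of (metric(Y,e))) (g \<circ> snd)"
    using continuous_map_compose[OF continuous_map_fst g] continuous_map_compose[OF continuous_map_snd g]
    by simp_all
  have "(\<lambda>(x,y). e (g x) (g y)) (x,y) = (\<lambda>(x,y). d x y) (x,y)" if "x \<in> M" "y \<in> M" for x y
  proof (rule forall_in_closure_of_eq[where f = "\<lambda>(x,y). e (g x) (g y)" and g = "\<lambda>(x,y). d x y"])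
    show "(x,y) \<in> ?T closure_of (S \<times> S)"
      using that unfolding closure_of_Times S by blast
    show "continuous_map ?T euclidean (\<lambda>(x,y). e (g x) (g y))"
      using continuous_map_mdist[OF gfst gsnd] by (simp add: case_prod_beta')
    show "continuous_map ?T euclidean (\<lambda>(x,y). d x y)"
      using continuous_map_metric[of "metric(M,d)"] by simp
    show "(\<lambda>(x,y). e (g x) (g y)) z = (\<lambda>(x,y). d x y) z" if "z \<in> S \<times> S" for z
      using that gh h unfolding isometry_map_def by auto
  qed simp
  then have "\<forall>x\<in>M. \<forall>y\<in>M. e (g x) (g y) = d x y"
    by simp
  moreover have "g ` M \<subseteq> Y"
    using continuous_map_image_subset_topspace[OF g] by simp
  ultimately show ?thesis
    unfolding isometry_map_def by (intro conjI)
qed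

lemma isometry_extends_to_closure:
  assumes M: "Metric_space M d" and Y: "Metric_space Y e" and Yc: "Metric_space.mcomplete Y e"
    and S: "S \<subseteq> M" and dense: "Metric_space.mtopology M d closure_of S = M"
    and h: "isometry_map S d Y e h"
  obtains g where "isometry_map M d Y e g" "\<And>x. x \<in> S \<Longrightarrow> g x = h x"
proof -
  interpret M: Metric_space M d by (rule M)
  interpret Y: Metric_space Y e by (rule Y)
  have h': "Lipschitz_continuous_map (submetric (metric(M,d)) S) (metric(Y,e)) h"
    using S h unfolding Lipschitz_continuous_map_def isometry_map_def
    by (auto intro!: exI[of _ 1])
  have Yc': "mcomplete_of (metric(Y,e))"
    using Yc by simp
  obtain g
    where "Lipschitz_continuous_map (submetric (metric(M,d)) (mtopology_of (metric(M,d)) closure_of S)) (metric(Y,e)) g"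
      and gh: "\<And>x. x \<in> S \<Longrightarrow> g x = h x"
    using Lipschitz_continuous_map_extends_to_closure_of[OF Yc' h'] by blast
  moreover have "submetric (metric(M,d)) M = metric(M,d)"
    using submetric_mspace[of "metric(M,d)"] by simp
  ultimately have "Lipschitz_continuous_map (metric(M,d)) (metric(Y,e)) g"
    using dense by simp
  then have "continuous_map M.mtopology Y.mtopology g"
    using Lipschitz_continuous_imp_continuous_map[of "metric(M,d)" "metric(Y,e)" g] by simp
  then have "isometry_map M d Y e g"
    using continuous_map_isometric_on_dense[OF M Y dense h] gh by blast
  then show thesis
    using gh by (rule that)
qed

lemma isometry_extends_along_dense_isometry:
  assumes M: "Metric_space M d" and X: "Metric_space X D"
    and Y: "Metric_space Y e" and Yc: "Metric_space.mcomplete Y e"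
    and j: "dense_isometry M d X D j" and h: "isometry_map M d Y e h"
  obtains g where "isometry_map X D Y e g" "\<And>x. x \<in> M \<Longrightarrow> g (j x) = h x"
proof -
  have jM: "j ` M \<subseteq> X" and dense: "Metric_space.mtopology X D closure_of j ` M = X"
    using j unfolding dense_isometry_def isometry_map_def by auto
  have inj: "inj_on j M"
    using isometry_map_imp_inj_on[OF M X] j unfolding dense_isometry_def by blast
  have "isometry_map (j ` M) D Y e (h \<circ> inv_into M j)"
    using h j inj unfolding isometry_map_def dense_isometry_def by auto
  then obtain g where "isometry_map X D Y e g" and "\<And>z. z \<in> j ` M \<Longrightarrow> g z = (h \<circ> inv_into M j) z"
    using isometry_extends_to_closure[OF X Y Yc jM dense] by metis
  then show thesis
    using inj that by auto
qed

lemma dense_isometry_from_mcomplete_imp_isometric_iso: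
  assumes M: "Metric_space M d" and Mc: "Metric_space.mcomplete M d"
    and Y: "Metric_space Y e" and f: "dense_isometry M d Y e f"
  shows "isometric_iso M d Y e f"
proof -
  interpret M: Metric_space M d by (rule M)
  interpret Y: Metric_space Y e by (rule Y)
  have iso: "isometry_map M d Y e f" and dense: "Y.mtopology closure_of f ` M = Y"
    using f unfolding dense_isometry_def by auto
  have cont: "continuous_map M.mtopology Y.mtopology f"
    using isometry_map_imp_continuous_map[OF M Y iso] .
  have "Y \<subseteq> f ` M"
  proof
    fix y assume "y \<in> Y"
    then have "y \<in> Y.mtopology closure_of f ` M"
      using dense by simp
    then obtain \<sigma> where \<sigma>: "range \<sigma> \<subseteq> f ` M" and lim: "limitin Y.mtopology \<sigma> y sequentially"
      unfolding Y.closure_of_sequentially by auto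
    then have "\<forall>n. \<exists>x. x \<in> M \<and> \<sigma> n = f x"
      by blast
    then obtain x where "\<forall>n. x n \<in> M \<and> \<sigma> n = f (x n)"
      by (metis choice)
    then have x: "\<And>n. x n \<in> M" and \<sigma>x: "\<sigma> = f \<circ> x"
      by auto
    have "range \<sigma> \<subseteq> Y"
      using \<sigma> iso unfolding isometry_map_def by blast
    then have "Y.MCauchy \<sigma>"
      using lim by (rule Y.convergent_imp_MCauchy)
    moreover have dx: "\<And>n n'. d (x n) (x n') = e (\<sigma> n) (\<sigma> n')"
      using iso x unfolding isometry_map_def \<sigma>x by simp
    ultimately have "M.MCauchy x"
      using x unfolding M.MCauchy_def Y.MCauchy_def dx by blast
    then obtain l where l: "limitin M.mtopology x l sequentially"
      using Mc unfolding M.mcomplete_def by blast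
    then have "limitin Y.mtopology \<sigma> (f l) sequentially"
      unfolding \<sigma>x by (rule continuous_map_limit[OF cont])
    then have "y = f l"
      using Y.limitin_metric_unique[OF lim] by simp
    moreover have "l \<in> M"
      using l M.limitin_mspace by blast
    ultimately show "y \<in> f ` M"
      by blast
  qed
  then show ?thesis
    using iso unfolding isometric_iso_def isometry_map_def by auto
qed

lemma closure_of_eq_topspace_superset:
  assumes "X closure_of S = topspace X" and "S \<subseteq> T"
  shows "X closure_of T = topspace X"
  using assms closure_of_mono[OF assms(2)] closure_of_subset_topspace[of X T] by blast

lemma dense_isometry_compose:
  assumes B: "Metric_space B b" and C: "Metric_space C c"
    and f: "dense_isometry A a B b f" and g: "dense_isometry B b C c g"
  shows "dense_isometry A a C c (g \<circ> f)"
proof -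
  let ?B = "Metric_space.mtopology B b" and ?C = "Metric_space.mtopology C c"
  have "continuous_map ?B ?C g"
    using isometry_map_imp_continuous_map[OF B C] g unfolding dense_isometry_def by blast
  then have "g ` B \<subseteq> ?C closure_of g ` f ` A"
    using continuous_map_image_closure_subset[of ?B ?C g "f ` A"] f
    unfolding dense_isometry_def by simp
  then have "?C closure_of g ` B \<subseteq> ?C closure_of g ` f ` A"
    by (metis closure_of_closure_of closure_of_mono)
  then have "?C closure_of (g \<circ> f) ` A = C"
    using g closure_of_subset_topspace[of ?C] Metric_space.topspace_mtopology[OF C]
    unfolding dense_isometry_def image_comp by blast
  moreover have "isometry_map A a C c (g \<circ> f)"
    using f g unfolding dense_isometry_def isometry_map_def by (auto simp: image_subset_iff)
  ultimately show ?thesis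
    unfolding dense_isometry_def by blast
qed

lemma is_completion_through_dense_isometry:
  assumes M: "Metric_space M d" and N: "Metric_space N e"
    and \<iota>: "dense_isometry M d N e \<iota>" and j: "is_completion M d X D j"
  shows "\<exists>\<phi>. is_completion N e X D \<phi>"
proof -
  have X: "Metric_space X D" "Metric_space.mcomplete X D" and j': "dense_isometry M d X D j"
    using j unfolding is_completion_def by auto
  have "isometry_map M d X D j"
    using j' unfolding dense_isometry_def by blast
  then obtain \<phi> where \<phi>: "isometry_map N e X D \<phi>" and \<phi>j: "\<And>x. x \<in> M \<Longrightarrow> \<phi> (\<iota> x) = j x"
    using isometry_extends_along_dense_isometry[OF M N X \<iota>] by blast
  have "j ` M = \<phi> ` \<iota> ` M"
    unfolding image_image by (rule image_cong) (simp_all add: \<phi>j)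
  also have "\<dots> \<subseteq> \<phi> ` N"
    using \<iota> unfolding dense_isometry_def isometry_map_def by blast
  finally have "Metric_space.mtopology X D closure_of \<phi> ` N = X"
    using closure_of_eq_topspace_superset j' Metric_space.topspace_mtopology[OF X(1)]
    unfolding dense_isometry_def by metis
  then show ?thesis
    using X \<phi> unfolding is_completion_def dense_isometry_def by blast
qed

lemma completions_isometric_iso:
  assumes M: "Metric_space M d"
    and j: "is_completion M d X D j" and k: "is_completion M d Y E k"
  shows "\<exists>f. isometric_iso X D Y E f"
proof -
  have X: "Metric_space X D" "Metric_space.mcomplete X D" and j': "dense_isometry M d X D j"
    using j unfolding is_completion_def by auto
  have Y: "Metric_space Y E" "Metric_space.mcomplete Y E" and k': "dense_isometry M d Y E k"
    using k unfolding is_completion_def by auto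
  have "isometry_map M d Y E k"
    using k' unfolding dense_isometry_def by blast
  then obtain f where f: "isometry_map X D Y E f" and fj: "\<And>x. x \<in> M \<Longrightarrow> f (j x) = k x"
    using isometry_extends_along_dense_isometry[OF M X(1) Y j'] by blast
  have "k ` M = f ` j ` M"
    unfolding image_image by (rule image_cong) (simp_all add: fj)
  also have "\<dots> \<subseteq> f ` X"
    using j' unfolding dense_isometry_def isometry_map_def by blast
  finally have "Metric_space.mtopology Y E closure_of f ` X = Y"
    using closure_of_eq_topspace_superset k' Metric_space.topspace_mtopology[OF Y(1)]
    unfolding dense_isometry_def by metis
  then have "isometric_iso X D Y E f"
    using dense_isometry_from_mcomplete_imp_isometric_iso[OF X Y(1)] f
    unfolding dense_isometry_def by blast
  then show ?thesis
    by blast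
qed

lemma is_completion_imp_Polish_metric_space:
  assumes "countable M" and "is_completion M d X D j"
  shows "Polish_metric_space X D"
proof -
  have X: "Metric_space X D"
    using assms(2) unfolding is_completion_def by blast
  have "countable (j ` M)" "j ` M \<subseteq> X" "Metric_space.mtopology X D closure_of j ` M = X"
    using assms unfolding is_completion_def dense_isometry_def isometry_map_def by auto
  then have "separable_space (Metric_space.mtopology X D)"
    unfolding separable_space_def Metric_space.topspace_mtopology[OF X] by blast
  then show ?thesis
    using assms(2) unfolding Polish_metric_space_def is_completion_def by blast
qed

lemma Metric_space_pullback:
  assumes X: "Metric_space X D" and g: "inj_on g A" "g ` A \<subseteq> X"
  shows "Metric_space A (\<lambda>a b. D (g a) (g b))"
proof
  interpret X: Metric_space X D by (rule X)
  fix a b c assume abc: "a \<in> A" "b \<in> A" "c \<in> A"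
  then have gabc: "g a \<in> X" "g b \<in> X" "g c \<in> X"
    using g(2) by auto
  show "(D (g a) (g b) = 0) = (a = b)"
    using X.zero[OF gabc(1,2)] inj_on_eq_iff[OF g(1) abc(1,2)] by simp
  show "D (g a) (g c) \<le> D (g a) (g b) + D (g b) (g c)"
    using X.triangle[OF gabc(1,2,3)] .
qed (simp_all add: Metric_space.nonneg[OF X] Metric_space.commute[OF X])

lemma dense_isometry_into_enumeration:
  assumes X: "Metric_space X D" and g: "bij_betw g A C" and CX: "C \<subseteq> X"
    and h: "dense_isometry M d X D h" and hC: "h ` M \<subseteq> C"
  shows "dense_isometry M d A (\<lambda>a b. D (g a) (g b)) (inv_into A g \<circ> h)"
proof -
  interpret X: Metric_space X D by (rule X)
  have gA: "g ` A = C" and inj: "inj_on g A"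
    using g unfolding bij_betw_def by auto
  interpret A: Metric_space A "\<lambda>a b. D (g a) (g b)"
    by (rule Metric_space_pullback[OF X inj]) (use gA CX in blast)
  have hM: "h ` M \<subseteq> X" and h_iso: "\<forall>x\<in>M. \<forall>y\<in>M. D (h x) (h y) = d x y"
    and h_dense: "X.mtopology closure_of h ` M = X"
    using h unfolding dense_isometry_def isometry_map_def by auto
  have "h x \<in> g ` A" if "x \<in> M" for x
    using that hC gA by blast
  then have g_inv: "g (inv_into A g (h x)) = h x" and inv_A: "inv_into A g (h x) \<in> A" if "x \<in> M" for x
    using that by (simp_all add: f_inv_into_f inv_into_into)
  have approx: "\<forall>y\<in>X. \<forall>r>0. \<exists>z\<in>h ` M. D y z < r"
    using X.dense_in_mspace_iff[OF hM] h_dense by blast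
  have "\<exists>y\<in>(inv_into A g \<circ> h) ` M. D (g a) (g y) < r" if "a \<in> A" "r > 0" for a r
  proof -
    have "g a \<in> X"
      using that gA CX by blast
    then obtain x where "x \<in> M" "D (g a) (h x) < r"
      using approx \<open>r > 0\<close> by blast
    then show ?thesis
      using g_inv by force
  qed
  moreover have "(inv_into A g \<circ> h) ` M \<subseteq> A"
    using inv_A by auto
  ultimately have "A.mtopology closure_of (inv_into A g \<circ> h) ` M = A"
    using A.dense_in_mspace_iff by blast
  moreover have "isometry_map M d A (\<lambda>a b. D (g a) (g b)) (inv_into A g \<circ> h)"
    unfolding isometry_map_def using inv_A g_inv h_iso by auto
  ultimately show ?thesis
    unfolding dense_isometry_def by blast
qed

lemma dense_isometries_into_common_metric_on_nat:
  fixes d0 d1 :: "nat \<Rightarrow> nat \<Rightarrow> real"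
  assumes X: "Metric_space X D" and d1: "Metric_space UNIV d1"
    and h0: "dense_isometry UNIV d0 X D h0" and h1: "dense_isometry UNIV d1 X D h1"
  shows "\<exists>dstar :: nat \<Rightarrow> nat \<Rightarrow> real. Metric_space UNIV dstar \<and>
           (\<exists>\<iota>0 \<iota>1. dense_isometry UNIV d0 UNIV dstar \<iota>0 \<and> dense_isometry UNIV d1 UNIV dstar \<iota>1)"
proof -
  define C where "C = range h0 \<union> range h1"
  \<comment> \<open>\<open>d1\<close> being a metric makes \<open>h1\<close> injective, so \<open>C\<close> is infinite and can be enumerated by \<open>nat\<close>\<close>
  have "inj h1"
    using isometry_map_imp_inj_on[OF d1 X] h1 unfolding dense_isometry_def by blast
  then have "infinite C"
    unfolding C_def using range_inj_infinite infinite_super by blast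
  moreover have "countable C"
    unfolding C_def by simp
  ultimately obtain e :: "_ \<Rightarrow> nat" where "bij_betw e C UNIV"
    using countableE_infinite by blast
  then have g: "bij_betw (inv_into C e) UNIV C"
    by (rule bij_betw_inv_into)
  have CX: "C \<subseteq> X"
    using h0 h1 unfolding C_def dense_isometry_def isometry_map_def by blast
  have "Metric_space UNIV (\<lambda>a b. D (inv_into C e a) (inv_into C e b))"
    using Metric_space_pullback[OF X bij_betw_imp_inj_on[OF g]] bij_betw_imp_surj_on[OF g] CX
    by blast
  moreover have "range h0 \<subseteq> C" "range h1 \<subseteq> C"
    unfolding C_def by auto
  ultimately show ?thesis
    using dense_isometry_into_enumeration[OF X g CX] h0 h1 by blast
qed

theorem corollary3p4:
  fixes d0 d1 :: "nat \<Rightarrow> nat \<Rightarrow> real"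
    and X0 :: "'a set" and D0 :: "'a \<Rightarrow> 'a \<Rightarrow> real" and j0 :: "nat \<Rightarrow> 'a"
    and X1 :: "'b set" and D1 :: "'b \<Rightarrow> 'b \<Rightarrow> real" and j1 :: "nat \<Rightarrow> 'b"
  assumes "Metric_space UNIV d0" and "Metric_space UNIV d1"
    and "is_completion UNIV d0 X0 D0 j0"
    and "is_completion UNIV d1 X1 D1 j1"
  shows "(Polish_metric_space X0 D0 \<and> Polish_metric_space X1 D1 \<and>
          (\<exists>f. isometric_iso X0 D0 X1 D1 f))
     \<longleftrightarrow> (\<exists>dstar :: nat \<Rightarrow> nat \<Rightarrow> real. Metric_space UNIV dstar \<and>
            (\<exists>\<iota>0 \<iota>1. dense_isometry UNIV d0 UNIV dstar \<iota>0 \<and>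
                      dense_isometry UNIV d1 UNIV dstar \<iota>1))"
proof -
  have X0: "Metric_space X0 D0" and j0: "dense_isometry UNIV d0 X0 D0 j0"
    using assms(3) unfolding is_completion_def by auto
  have X1: "Metric_space X1 D1" "Metric_space.mcomplete X1 D1" and j1: "dense_isometry UNIV d1 X1 D1 j1"
    using assms(4) unfolding is_completion_def by auto
  show ?thesis
  proof
    assume "Polish_metric_space X0 D0 \<and> Polish_metric_space X1 D1 \<and> (\<exists>f. isometric_iso X0 D0 X1 D1 f)"
    then obtain f where "isometric_iso X0 D0 X1 D1 f"
      by blast
    then have "dense_isometry X0 D0 X1 D1 f"
      using Metric_space.topspace_mtopology[OF X1(1)] closure_of_topspace
      unfolding isometric_iso_def dense_isometry_def by metis
    then have "dense_isometry UNIV d0 X1 D1 (f \<circ> j0)"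
      by (rule dense_isometry_compose[OF X0 X1(1) j0])
    then show "\<exists>dstar :: nat \<Rightarrow> nat \<Rightarrow> real. Metric_space UNIV dstar \<and>
        (\<exists>\<iota>0 \<iota>1. dense_isometry UNIV d0 UNIV dstar \<iota>0 \<and> dense_isometry UNIV d1 UNIV dstar \<iota>1)"
      by (rule dense_isometries_into_common_metric_on_nat[OF X1(1) assms(2) _ j1])
  next
    assume "\<exists>dstar :: nat \<Rightarrow> nat \<Rightarrow> real. Metric_space UNIV dstar \<and>
        (\<exists>\<iota>0 \<iota>1. dense_isometry UNIV d0 UNIV dstar \<iota>0 \<and> dense_isometry UNIV d1 UNIV dstar \<iota>1)"
    then obtain dstar :: "nat \<Rightarrow> nat \<Rightarrow> real" and \<iota>0 \<iota>1 where dstar: "Metric_space UNIV dstar"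
      and \<iota>0: "dense_isometry UNIV d0 UNIV dstar \<iota>0" and \<iota>1: "dense_isometry UNIV d1 UNIV dstar \<iota>1"
      by blast
    obtain \<phi> where "is_completion UNIV dstar X1 D1 \<phi>"
      using is_completion_through_dense_isometry[OF assms(2) dstar \<iota>1 assms(4)] by blast
    then have "dense_isometry UNIV d0 X1 D1 (\<phi> \<circ> \<iota>0)"
      using dense_isometry_compose[OF dstar X1(1) \<iota>0] unfolding is_completion_def by blast
    then have "is_completion UNIV d0 X1 D1 (\<phi> \<circ> \<iota>0)"
      using X1 unfolding is_completion_def by blast
    moreover have "countable (UNIV :: nat set)"
      by simp
    ultimately show "Polish_metric_space X0 D0 \<and> Polish_metric_space X1 D1 \<and> (\<exists>f. isometric_iso X0 D0 X1 D1 f)"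
      using completions_isometric_iso[OF assms(1,3)]
        is_completion_imp_Polish_metric_space[OF _ assms(3)]
        is_completion_imp_Polish_metric_space[OF _ assms(4)] by blast
  qed
qed

end
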